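(* Fix an iteration $i$ of the algorithm in the context, and let $z=z^{(i)}$, $\lambda=\lambda^{(i)}$, $\nu=\nu^{(i)}$, $s=s^{(i)}$, $d_z=d_z^{(i)}$, $d_\lambda=d_\lambda^{(i)}$, $d_\nu=d_\nu^{(i)}$, $d_s=d_s^{(i)}$. For $\rho\ge0$ let $\phi(t,\rho)=\mathcal{L}_{\mathrm{aug}}^{\rho}(z+td_z,\lambda+td_\lambda,\nu+td_\nu,s+td_s)$ and $\phi'(0,\rho)$ its derivative in $t$ at $t=0$. Then there exists $\hat\rho\ge0$ such that $\sup_{\rho\ge\hat\rho}\phi'(0,\rho)\le-\frac{1}{2\alpha^{(i)}}\|d_z^{(i)}\|^2.$
   Context: Problem: $\min_{z\in\mathbb{R}^n}J(z)$ s.t. $g(z)\le0$, $h(z)=0$, with $J,g,h$ twice continuously differentiable ($g:\mathbb{R}^n\to\mathbb{R}^m$, $h:\mathbb{R}^n\to\mathbb{R}^p$); $\nabla g,\nabla h$ have component gradients as columns. Augmented Lagrangian: $\mathcal{L}_{\mathrm{aug}}^{\rho}(z,\lambda,\nu,s)=J(z)+(g(z)+s)^\top\lambda+h(z)^\top\nu+\frac{\rho}{2}\|g(z)+s\|^2+\frac{\rho}{2}\|h(z)\|^2$. Algorithm: at iterate $z^{(i)}$ with bounded step $\alpha^{(i)}>0$, $d_z^{(i)}$ is the Euclidean projection of $-\alpha^{(i)}\nabla J(z^{(i)})$ onto $\mathcal{C}^{(i)}=\{d: g(z^{(i)})+\nabla g(z^{(i)})^\top d\le0,\ h(z^{(i)})+\nabla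 h(z^{(i)})^\top d=0\}$, with multipliers $\lambda_G^{(i)}\ge0$, $\nu_G^{(i)}$ satisfying $\frac{1}{\alpha^{(i)}}d_z^{(i)}+\nabla J(z^{(i)})+\nabla g(z^{(i)})\lambda_G^{(i)}+\nabla h(z^{(i)})\nu_G^{(i)}=0$, $\mathrm{diag}(\lambda_G^{(i)})(g(z^{(i)})+\nabla g(z^{(i)})^\top d_z^{(i)})=0$, $h(z^{(i)})+\nabla h(z^{(i)})^\top d_z^{(i)}=0$. Duals: $\lambda^{(0)}=\lambda_G^{(0)}$, $\nu^{(0)}=\nu_G^{(0)}$, $d_\lambda^{(i)}=\lambda_G^{(i)}-\lambda^{(i)}$, $d_\nu^{(i)}=\nu_G^{(i)}-\nu^{(i)}$. Slack $s^{(i)}\in\mathbb{R}^m_{\ge0}$: $s^{(i)}_j=\max\{0,-g_j(z^{(i)})\}$ if the current penalty is $0$, else $\max\{0,-g_j(z^{(i)})-\lambda^{(i)}_j/\rho\}$; $d_s^{(i)}$ is defined by $g(z^{(i)})+\nabla g(z^{(i)})^\top d_z^{(i)}+s^{(i)}+d_s^{(i)}=0$. Standing assumptions: $\mathcal{C}^{(i)}\ne\emptyset$ for all $i$; all $z^{(i)}$, $z^{(i)}+d_z^{(i)}$ lie in a compact set; $J,g,h$ and their first and second derivatives are uniformly bounded there. Assumption (R): for all $i$, $\nabla h(z^{(i)})$ together with the columns $\nabla g_j(z^{(i)})$ active in the projection problem has full column rank, and strict complementarity holds. *)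

theory Defs
  imports "HOL-Analysis.Analysis"
begin

definition C2_with :: "(real^'n \<Rightarrow> real) \<Rightarrow> (real^'n \<Rightarrow> real^'n) \<Rightarrow> (real^'n \<Rightarrow> real^'n^'n) \<Rightarrow> bool" where
  "C2_with f gf Hf \<longleftrightarrow>
     (\<forall>x. (f has_derivative (\<lambda>v. gf x \<bullet> v)) (at x)) \<and>
     (\<forall>x. (gf has_derivative (\<lambda>v. Hf x *v v)) (at x)) \<and>
     continuous_on UNIV Hf"

text \<open>Augmented Lagrangian. The matrix Gg x (type real^'m^'n, an n x m matrix)
  plays the role of nabla g(x): its j-th column is the gradient of g_j.\<close>
definition L_aug ::
  "(real^'n \<Rightarrow> real) \<Rightarrow> (real^'n \<Rightarrow> real^'m) \<Rightarrow> (real^'n \<Rightarrow> real^'p) \<Rightarrow> real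
    \<Rightarrow> real^'n \<Rightarrow> real^'m \<Rightarrow> real^'p \<Rightarrow> real^'m \<Rightarrow> real" where
  "L_aug J g h \<rho> z lam nu s =
     J z + (g z + s) \<bullet> lam + h z \<bullet> nu
     + \<rho> / 2 * (norm (g z + s))\<^sup>2 + \<rho> / 2 * (norm (h z))\<^sup>2"

definition lin_set ::
  "(real^'n \<Rightarrow> real^'m) \<Rightarrow> (real^'n \<Rightarrow> real^'m^'n) \<Rightarrow> (real^'n \<Rightarrow> real^'p) \<Rightarrow> (real^'n \<Rightarrow> real^'p^'n)
    \<Rightarrow> real^'n \<Rightarrow> (real^'n) set" where
  "lin_set g Gg h Gh z =
     {d. (\<forall>j. (g z + transpose (Gg z) *v d) $ j \<le> 0) \<and> h z + transpose (Gh z) *v d = 0}"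

end

theory Submission
  imports Defs
begin

text \<open>Differentiating \<open>\<phi>(t, \<rho>)\<close> at \<open>t = 0\<close> and eliminating \<open>\<nabla>J(z)\<^sup>T d\<^sub>z\<close> with
  the stationarity and complementarity conditions of the projection gives
  \<open>\<phi>'(0, \<rho>) = - norm d\<^sub>z\<^sup>2 / \<alpha> - \<lambda>\<^sub>G\<^sup>T s + c\<^sup>T x - \<rho> norm x\<^sup>2\<close> with
  \<open>x = (g(z) + s, h(z))\<close>. Here \<open>\<lambda>\<^sub>G\<^sup>T s \<ge> 0\<close>, and a quadratic penalty eventually
  dominates the linear term \<open>c\<^sup>T x\<close>, which vanishes with \<open>x\<close>; so the bound holds
  with \<open>norm d\<^sub>z\<^sup>2 / (2\<alpha>)\<close> to spare.\<close>

lemma has_derivative_componentwise_columns: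
  fixes g :: "real^'n \<Rightarrow> real^'m" and G :: "real^'m^'n"
  assumes "\<And>j. ((\<lambda>x. g x $ j) has_derivative (\<lambda>v. column j G \<bullet> v)) (at z)"
  shows "(g has_derivative (\<lambda>v. transpose G *v v)) (at z)"
proof -
  have component: "(transpose G *v v) $ j = column j G \<bullet> v" for v j
    by (simp add: matrix_vector_mult_def transpose_def column_def inner_vec_def mult.commute)
  show ?thesis
    apply (subst has_derivative_componentwise_within)
    apply (auto simp: Basis_vec_def)
    using assms component by (simp add: cart_eq_inner_axis[symmetric] inner_axis)
qed

lemma has_derivative_along_line:
  fixes g :: "'a::real_normed_vector \<Rightarrow> 'b::real_normed_vector"
  assumes "(g has_derivative g') (at z)"
  shows "((\<lambda>t::real. g (z + t *\<^sub>R d)) has_derivative (\<lambda>t. g' (t *\<^sub>R d))) (at 0)"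
proof -
  have "((\<lambda>t::real. z + t *\<^sub>R d) has_derivative (\<lambda>t. t *\<^sub>R d)) (at 0)"
    by (auto intro!: derivative_eq_intros)
  from has_derivative_compose[OF this] assms show ?thesis
    by (simp add: o_def)
qed

lemma deriv_L_aug_along_line:
  fixes J :: "real^'n \<Rightarrow> real" and g :: "real^'n \<Rightarrow> real^'m" and h :: "real^'n \<Rightarrow> real^'p"
  assumes dJ: "(J has_derivative (\<lambda>v. gJ \<bullet> v)) (at z)"
    and dg: "(g has_derivative (\<lambda>v. Ag *v v)) (at z)"
    and dh: "(h has_derivative (\<lambda>v. Ah *v v)) (at z)"
  shows "deriv (\<lambda>t. L_aug J g h \<rho> (z + t *\<^sub>R dz) (lam + t *\<^sub>R dl)
                        (nu + t *\<^sub>R dn) (s + t *\<^sub>R ds)) 0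
     = gJ \<bullet> dz + (Ag *v dz + ds) \<bullet> lam + (g z + s) \<bullet> dl + (Ah *v dz) \<bullet> nu + h z \<bullet> dn
       + \<rho> * ((g z + s) \<bullet> (Ag *v dz + ds)) + \<rho> * (h z \<bullet> (Ah *v dz))"
    (is "deriv ?\<phi> 0 = ?D")
proof -
  note along = has_derivative_along_line[OF dJ] has_derivative_along_line[OF dg]
    has_derivative_along_line[OF dh]
  have "(?\<phi> has_derivative (\<lambda>t. ?D * t)) (at 0)"
    unfolding L_aug_def power2_norm_eq_inner
    apply (rule derivative_eq_intros along | simp)+
    apply (rule ext)
    apply (simp add: matrix_vector_mult_scaleR inner_add_left inner_add_right inner_commute
        algebra_simps)
    done
  then show ?thesis
    by (intro DERIV_imp_deriv) (simp add: has_field_derivative_def)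
qed

lemma matrix_vector_mult_inner_transpose: "((M::real^'a^'b) *v x) \<bullet> y = x \<bullet> (transpose M *v y)"
  by (metis dot_lmul_matrix inner_commute vector_transpose_matrix)

lemma deriv_L_aug_projection_direction:
  fixes J :: "real^'n \<Rightarrow> real" and g :: "real^'n \<Rightarrow> real^'m" and h :: "real^'n \<Rightarrow> real^'p"
    and Gg :: "real^'m^'n" and Gh :: "real^'p^'n"
  assumes dJ: "(J has_derivative (\<lambda>v. gJ \<bullet> v)) (at z)"
    and dg: "(g has_derivative (\<lambda>v. transpose Gg *v v)) (at z)"
    and dh: "(h has_derivative (\<lambda>v. transpose Gh *v v)) (at z)"
    and stat: "(1 / \<alpha>) *\<^sub>R dz + gJ + Gg *v lamG + Gh *v nuG = 0"
    and compl: "lamG \<bullet> (g z + transpose Gg *v dz) = 0"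
    and eqlin: "h z + transpose Gh *v dz = 0"
    and ds_def: "g z + transpose Gg *v dz + s + ds = 0"
  shows "deriv (\<lambda>t. L_aug J g h \<rho> (z + t *\<^sub>R dz) (lam + t *\<^sub>R (lamG - lam))
                        (nu + t *\<^sub>R (nuG - nu)) (s + t *\<^sub>R ds)) 0
     = - (1 / \<alpha>) * (norm dz)\<^sup>2 - lamG \<bullet> s
       + (2 *\<^sub>R (lamG - lam), 2 *\<^sub>R (nuG - nu)) \<bullet> (g z + s, h z)
       - \<rho> * ((g z + s, h z) \<bullet> (g z + s, h z))"
proof -
  define A where "A = transpose Gg *v dz"
  define B where "B = transpose Gh *v dz"
  have slack: "A + ds = - (g z + s)"
    using ds_def unfolding A_def by (simp add: algebra_simps eq_neg_iff_add_eq_0)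
  have equality: "B = - h z"
    using eqlin unfolding B_def by (simp add: eq_neg_iff_add_eq_0 add.commute)
  have "((1 / \<alpha>) *\<^sub>R dz + gJ + Gg *v lamG + Gh *v nuG) \<bullet> dz = 0"
    using stat by simp
  then have descent: "gJ \<bullet> dz = - (1 / \<alpha>) * (dz \<bullet> dz) - lamG \<bullet> A - nuG \<bullet> B"
    unfolding A_def B_def
    by (simp add: inner_add_left matrix_vector_mult_inner_transpose algebra_simps)
  have "deriv (\<lambda>t. L_aug J g h \<rho> (z + t *\<^sub>R dz) (lam + t *\<^sub>R (lamG - lam))
                        (nu + t *\<^sub>R (nuG - nu)) (s + t *\<^sub>R ds)) 0
      = gJ \<bullet> dz + (A + ds) \<bullet> lam + (g z + s) \<bullet> (lamG - lam) + B \<bullet> nu + h z \<bullet> (nuG - nu)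
       + \<rho> * ((g z + s) \<bullet> (A + ds)) + \<rho> * (h z \<bullet> B)"
    unfolding A_def B_def by (rule deriv_L_aug_along_line[OF dJ dg dh])
  also have "\<dots> = - (1 / \<alpha>) * (norm dz)\<^sup>2 - lamG \<bullet> s
       + (2 *\<^sub>R (lamG - lam), 2 *\<^sub>R (nuG - nu)) \<bullet> (g z + s, h z)
       - \<rho> * ((g z + s, h z) \<bullet> (g z + s, h z))"
    using compl unfolding slack equality descent power2_norm_eq_inner A_def[symmetric]
    by (simp add: inner_add_left inner_add_right inner_diff_left inner_diff_right inner_commute
        algebra_simps)
  finally show ?thesis .
qed

lemma eventually_inner_le_penalty:
  fixes c x :: "'a::real_inner"
  shows "\<exists>\<rho>\<^sub>0 \<ge> 0. \<forall>\<rho> \<ge> \<rho>\<^sub>0. c \<bullet> x \<le> \<rho> * (x \<bullet> x)"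
proof (cases "x = 0")
  case False
  then have pos: "x \<bullet> x > 0" by simp
  show ?thesis
  proof (intro exI[of _ "max 0 ((c \<bullet> x) / (x \<bullet> x))"] conjI allI impI)
    fix \<rho> assume "max 0 ((c \<bullet> x) / (x \<bullet> x)) \<le> \<rho>"
    then show "c \<bullet> x \<le> \<rho> * (x \<bullet> x)"
      using pos by (simp add: divide_le_eq)
  qed simp
qed auto

theorem lemma4p5:
  fixes J :: "real^'n \<Rightarrow> real" and gJ :: "real^'n \<Rightarrow> real^'n" and HJ :: "real^'n \<Rightarrow> real^'n^'n"
    and g :: "real^'n \<Rightarrow> real^'m" and Gg :: "real^'n \<Rightarrow> real^'m^'n" and Hg :: "'m \<Rightarrow> real^'n \<Rightarrow> real^'n^'n"
    and h :: "real^'n \<Rightarrow> real^'p" and Gh :: "real^'n \<Rightarrow> real^'p^'n" and Hh :: "'p \<Rightarrow> real^'n \<Rightarrow> real^'n^'n"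
    and z dz :: "real^'n" and \<alpha> rho_cur :: real
    and lamG lam s ds :: "real^'m" and nuG nu :: "real^'p"
  assumes C2J: "C2_with J gJ HJ"
    and C2g: "\<forall>j. C2_with (\<lambda>x. g x $ j) (\<lambda>x. column j (Gg x)) (Hg j)"
    and C2h: "\<forall>k. C2_with (\<lambda>x. h x $ k) (\<lambda>x. column k (Gh x)) (Hh k)"
    and alpha_pos: "\<alpha> > 0"
    and C_nonempty: "lin_set g Gg h Gh z \<noteq> {}"
    and dz_in: "dz \<in> lin_set g Gg h Gh z"
    and dz_proj: "\<forall>d \<in> lin_set g Gg h Gh z. dist dz (- \<alpha> *\<^sub>R gJ z) \<le> dist d (- \<alpha> *\<^sub>R gJ z)"
    and lamG_nonneg: "\<forall>j. lamG $ j \<ge> 0"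
    and stat: "(1 / \<alpha>) *\<^sub>R dz + gJ z + Gg z *v lamG + Gh z *v nuG = 0"
    and compl: "\<forall>j. lamG $ j * (g z + transpose (Gg z) *v dz) $ j = 0"
    and eqlin: "h z + transpose (Gh z) *v dz = 0"
    and rho_cur_nonneg: "rho_cur \<ge> 0"
    and s_def: "\<forall>j. s $ j = (if rho_cur = 0 then max 0 (- g z $ j)
                               else max 0 (- g z $ j - lam $ j / rho_cur))"
    and ds_def: "g z + transpose (Gg z) *v dz + s + ds = 0"
  shows "\<exists>rho_hat \<ge> 0. \<forall>\<rho> \<ge> rho_hat.
           deriv (\<lambda>t. L_aug J g h \<rho> (z + t *\<^sub>R dz) (lam + t *\<^sub>R (lamG - lam))
                        (nu + t *\<^sub>R (nuG - nu)) (s + t *\<^sub>R ds)) 0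
           \<le> - (1 / (2 * \<alpha>)) * (norm dz)\<^sup>2"
proof -
  have dJ: "(J has_derivative (\<lambda>v. gJ z \<bullet> v)) (at z)"
    using C2J by (simp add: C2_with_def)
  have dg: "(g has_derivative (\<lambda>v. transpose (Gg z) *v v)) (at z)"
    by (rule has_derivative_componentwise_columns) (use C2g in \<open>simp add: C2_with_def\<close>)
  have dh: "(h has_derivative (\<lambda>v. transpose (Gh z) *v v)) (at z)"
    by (rule has_derivative_componentwise_columns) (use C2h in \<open>simp add: C2_with_def\<close>)
  have compl_inner: "lamG \<bullet> (g z + transpose (Gg z) *v dz) = 0"
    unfolding inner_vec_def using compl by (intro sum.neutral) simp
  have slack_term: "lamG \<bullet> s \<ge> 0"
    unfolding inner_vec_def using lamG_nonneg s_def by (auto intro!: sum_nonneg)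
  have gap: "- (1 / \<alpha>) * (norm dz)\<^sup>2 \<le> - (1 / (2 * \<alpha>)) * (norm dz)\<^sup>2"
    using alpha_pos by (simp add: field_simps)
  obtain \<rho>\<^sub>0 where "\<rho>\<^sub>0 \<ge> 0" and penalty: "\<forall>\<rho> \<ge> \<rho>\<^sub>0.
      (2 *\<^sub>R (lamG - lam), 2 *\<^sub>R (nuG - nu)) \<bullet> (g z + s, h z) \<le> \<rho> * ((g z + s, h z) \<bullet> (g z + s, h z))"
    using eventually_inner_le_penalty by blast
  show ?thesis
    using \<open>\<rho>\<^sub>0 \<ge> 0\<close> penalty slack_term gap
    by (auto simp only: deriv_L_aug_projection_direction[OF dJ dg dh stat compl_inner eqlin ds_def]
        intro!: exI[of _ \<rho>\<^sub>0])
qed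

end
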